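(* Assume $a^2\rho(\mathbf P_1\mathbf E)<1$ and $B\ge B_0:=\dfrac{\bar M\log(a^2)}{\log(c^2/\bar a^2)}$. Define $\mathcal Z_\theta(b):=b^\theta\,\mathbf d^T(\mathbf I-b\mathbf P_1\mathbf E)^{-1}$ (a row vector) and $$\mathbf Q(\theta):=\big[\mathcal Z_\theta(\bar a^2)-\mathcal Z_\theta(c^2)\big]\frac{B}{c^{2\theta}}+\bar M\big[\mathcal Z_\theta(a^2)-\mathcal Z_\theta(1)\big]\in\mathbb R^{1\times n}.$$ If $\mathbf Q(D)<\mathbf 0$ elementwise for some $D\in\mathbb N$, then $\mathcal J_{S_j}^\theta<0$ for every $\theta\in\{1,\dots,D\}$, every reception index $j$, every $x_{S_j}\in\mathbb R$ and every $\gamma_{S_j}\in\{1,\dots,n\}$.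
   Context: Setup. Fix reals $a,L$ with $|a|>1$ and $\bar a:=a+L$ satisfying $0<\bar a^2<1$; fix $c$ with $\bar a^2<c^2<1$, $M>0$, $B>0$, and $\bar M:=M/(a^2-1)$. Plant $x_{k+1}=ax_k+u_k+v_k$, $v_k$ i.i.d., mean $0$, variance $M$, independent of everything else. Sensor decisions $t_k\in\{0,1\}$, receptions $r_k\in\{0,1\}$ ($r_k=0$ if $t_k=0$). Controller $u_k=L\hat x_k^+$, $\hat x_k:=\bar a\hat x_{k-1}^+$, $\hat x_k^+:=x_k$ if $r_k=1$, else $\hat x_k$. Channel state $\gamma_k\in\{1,\dots,n\}$ with $\Pr[\gamma_{k+1}=i\mid\gamma_k=j,t_k=\ell]=(\mathbf P_\ell)_{ij}$, $\mathbf P_0,\mathbf P_1$ column-stochastic; drop probabilities $\mathbf e\in[0,1]^n$ (if $t_k=1$, $r_k=1$ w.p. $1-e_{\gamma_k}$); $\mathbf E:=\mathrm{diag}(\mathbf e)$, $\mathbf d:=\mathbf 1-\mathbf e$, $\mathbf P^0:=\mathbf I$, $\boldsymbol\delta_i$ standard basis vectors, $\rho$ spectral radius. $r_0=1$; $R_k:=\max\{i<k:r_i=1\}$; $S_0:=0$, $S_{j+1}:=\min\{k>S_j:r_k=1\}$. $I_k^+$ is the sensor's post-transmission information at time $k$, which at a reception time $S_j$ contains $x_{S_j}$, $z^+_{S_j}=0$, $S_j$ and $\gamma_{S_j}$. Performance function $h_k:=x_k^2-\max\{c^{2(k-R_k)}x_{R_k}^2,B\}$. Nominal policy $\mathcal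 T_k^D$: $t_i=0$ for $k\le i\le k+D-1$, $t_i=1$ for $i\ge k+D$. Performance-evaluation function: $\mathcal J_{S_j}^\theta:=\mathbb E_{\mathcal T^{\theta-1}_{S_j+1}}[h_{S_{j+1}}\mid I_{S_j}^+]=\sum_{w\ge\theta}H(w,x_{S_j}^2)\,\mathbf d^T(\mathbf P_1\mathbf E)^{w-\theta}\mathbf P_0^{\theta-1}\mathbf P_1\boldsymbol\delta_{\gamma_{S_j}}$, where $H(w,y):=\bar a^{2w}y+\bar M(a^{2w}-1)-\max\{c^{2w}y,B\}$. *)

theory Defs
  imports "Jordan_Normal_Form.Spectral_Radius" "Jordan_Normal_Form.Gauss_Jordan_Elimination"
begin

(* Channel states are indexed 0..n-1 (paper: 1..n). Matrices are JNF matrices. *)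

definition column_stochastic :: "nat \<Rightarrow> real mat \<Rightarrow> bool" where
  "column_stochastic n P \<longleftrightarrow> P \<in> carrier_mat n n \<and>
     (\<forall>i<n. \<forall>j<n. 0 \<le> P $$ (i,j)) \<and> (\<forall>j<n. (\<Sum>i<n. P $$ (i,j)) = 1)"

definition diagE :: "nat \<Rightarrow> real vec \<Rightarrow> real mat" where
  "diagE n e = mat n n (\<lambda>(i,j). if i = j then e $ i else 0)"

definition dvec :: "nat \<Rightarrow> real vec \<Rightarrow> real vec" where
  "dvec n e = vec n (\<lambda>i. 1 - e $ i)"

definition rho :: "real mat \<Rightarrow> real" where
  "rho A = spectral_radius (map_mat complex_of_real A)"

definition Hfun :: "real \<Rightarrow> real \<Rightarrow> real \<Rightarrow> real \<Rightarrow> real \<Rightarrow> nat \<Rightarrow> real \<Rightarrow> real" where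
  "Hfun a abar c Mbar B w y = abar^(2*w) * y + Mbar * (a^(2*w) - 1) - max (c^(2*w) * y) B"

(* Performance-evaluation function J^theta at a reception time with x_{S_j} = x, gamma_{S_j} = g:
   sum_{w >= theta} H(w, x^2) d^T (P1 E)^(w-theta) P0^(theta-1) P1 delta_g  (w = k + theta) *)
definition Jfun :: "nat \<Rightarrow> real \<Rightarrow> real \<Rightarrow> real \<Rightarrow> real \<Rightarrow> real \<Rightarrow> real mat \<Rightarrow> real mat \<Rightarrow> real vec
                     \<Rightarrow> nat \<Rightarrow> real \<Rightarrow> nat \<Rightarrow> real" where
  "Jfun n a abar c Mbar B P0 P1 e \<theta> x g =
     (\<Sum>k. Hfun a abar c Mbar B (k + \<theta>) (x^2) *
        (dvec n e \<bullet> (((P1 * diagE n e) ^\<^sub>m k) * (P0 ^\<^sub>m (\<theta> - 1)) * P1 *\<^sub>v unit_vec n g)))"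

(* Z_theta(b) = b^theta d^T (I - b P1 E)^{-1}, as a (column) vector of its n entries *)
definition Zvec :: "nat \<Rightarrow> real mat \<Rightarrow> real vec \<Rightarrow> nat \<Rightarrow> real \<Rightarrow> real vec" where
  "Zvec n P1 e \<theta> b = (b^\<theta>) \<cdot>\<^sub>v
     ((the (mat_inverse (1\<^sub>m n - b \<cdot>\<^sub>m (P1 * diagE n e))))\<^sup>T *\<^sub>v dvec n e)"

definition Qvec :: "nat \<Rightarrow> real \<Rightarrow> real \<Rightarrow> real \<Rightarrow> real \<Rightarrow> real \<Rightarrow> real mat \<Rightarrow> real vec \<Rightarrow> nat \<Rightarrow> real vec" where
  "Qvec n a abar c Mbar B P1 e \<theta> =
     (B / c^(2*\<theta>)) \<cdot>\<^sub>v (Zvec n P1 e \<theta> (abar^2) - Zvec n P1 e \<theta> (c^2))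
     + Mbar \<cdot>\<^sub>v (Zvec n P1 e \<theta> (a^2) - Zvec n P1 e \<theta> 1)"

end

(*
  Condition on the channel state i at the first transmission: the evaluation function is a
  convex combination of J_i(theta, y) = sum_k H(k + theta, y) d^T (P1 E)^k delta_i.  The weights
  d^T (P1 E)^k delta_i decay faster than a^(-2k), so every series converges and Z_theta(b) is the
  Neumann series b^theta sum_k b^k d^T (P1 E)^k.  After the substitution y = y0 / c^(2 theta) each
  H(k + theta, y) is a sum of exponentials in theta, hence convex, so
  D J(theta) <= (D - theta) J(0) + theta J(D).  Termwise J(D) <= Q_i(D) < 0, and J(0) <= sup J(1)
  because its first term H(0, y) is nonpositive.  For theta = 1 this forces sup J(1) < 0, and then
  J(theta) < 0 for every theta in {1..D}.
*)
theory Submission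
  imports Defs
begin

lemma prefix_sum_mean_mono:
  fixes f :: "nat \<Rightarrow> real"
  assumes mono: "\<And>i j. i \<le> j \<Longrightarrow> f i \<le> f j" and "k \<le> m"
  shows "real m * (\<Sum>j<k. f j) \<le> real k * (\<Sum>j<m. f j)"
  using \<open>k \<le> m\<close>
proof (induction m rule: dec_induct)
  case (step m)
  have "(\<Sum>j<k. f j) \<le> real k * f m"
    using sum_mono[of "{..<k}" f "\<lambda>_. f m"] step mono by auto
  with step.IH show ?case by (simp add: algebra_simps)
qed simp

lemma power_le_convex_interpolation:
  fixes x :: real
  assumes x: "0 \<le> x" and "\<theta> \<le> D"
  shows "real D * x^\<theta> \<le> real (D - \<theta>) + real \<theta> * x^D"
proof -
  have "real D * (x^\<theta> - 1) \<le> real \<theta> * (x^D - 1)"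
  proof (cases "1 \<le> x")
    case True
    have "real D * (\<Sum>j<\<theta>. x^j) \<le> real \<theta> * (\<Sum>j<D. x^j)"
      by (rule prefix_sum_mean_mono[OF _ \<open>\<theta> \<le> D\<close>]) (use True in \<open>auto intro: power_increasing\<close>)
    then have "(x - 1) * (real D * (\<Sum>j<\<theta>. x^j)) \<le> (x - 1) * (real \<theta> * (\<Sum>j<D. x^j))"
      using True by (intro mult_left_mono) auto
    then show ?thesis by (simp add: power_diff_1_eq algebra_simps)
  next
    case False
    have "real D * (\<Sum>j<\<theta>. -(x^j)) \<le> real \<theta> * (\<Sum>j<D. -(x^j))"
      by (rule prefix_sum_mean_mono[OF _ \<open>\<theta> \<le> D\<close>]) (use False x in \<open>auto intro: power_decreasing\<close>)
    then have "(x - 1) * (real D * (\<Sum>j<\<theta>. x^j)) \<le> (x - 1) * (real \<theta> * (\<Sum>j<D. x^j))"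
      using False by (intro mult_left_mono_neg) (auto simp: sum_negf)
    then show ?thesis by (simp add: power_diff_1_eq algebra_simps)
  qed
  with \<open>\<theta> \<le> D\<close> show ?thesis by (simp add: of_nat_diff algebra_simps)
qed

lemma mult_sub_max_le:
  fixes p q y B :: real
  assumes "0 \<le> p" "p \<le> q" "q \<le> 1" "0 \<le> y" "0 < B"
  shows "p * y - max (q * y) B \<le> B * p - B * q"
proof (cases "B \<le> y")
  case True
  have "(p - q) * y \<le> (p - q) * B" using assms True by (intro mult_left_mono_neg) auto
  then show ?thesis by (simp add: algebra_simps max_def)
next
  case False
  have "p * y \<le> p * B" using assms False by (intro mult_left_mono) auto
  moreover have "q * B \<le> B" using assms by (simp add: mult_left_le_one_le)
  ultimately show ?thesis by (simp add: algebra_simps)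
qed

lemma summable_mult_of_geometric_bounds:
  fixes f g :: "nat \<Rightarrow> real"
  assumes f: "\<And>k. \<bar>f k\<bar> \<le> K' * x^k" and g: "\<And>k. \<bar>g k\<bar> \<le> K / s^k"
    and "0 \<le> x" "x < s"
  shows "summable (\<lambda>k. f k * g k)"
proof (rule summable_comparison_test)
  have s: "0 < s" using assms by simp
  show "summable (\<lambda>k. K' * K * (x / s)^k)"
    using assms s by (intro summable_mult summable_geometric) simp
  have "norm (f k * g k) \<le> K' * K * (x / s)^k" for k
  proof -
    have "norm (f k * g k) = \<bar>f k\<bar> * \<bar>g k\<bar>" by (simp add: abs_mult)
    also have "\<dots> \<le> (K' * x^k) * (K / s^k)"
      by (rule mult_mono[OF f g]) (auto intro: order_trans[OF abs_ge_zero f])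
    also have "\<dots> = K' * K * (x / s)^k" by (simp add: power_divide)
    finally show ?thesis .
  qed
  then show "\<exists>N. \<forall>k\<ge>N. norm (f k * g k) \<le> K' * K * (x / s)^k" by blast
qed

lemma smult_pow_mat:
  fixes x :: "'a :: comm_ring_1"
  assumes A: "A \<in> carrier_mat n n"
  shows "(x \<cdot>\<^sub>m A) ^\<^sub>m k = (x^k) \<cdot>\<^sub>m (A ^\<^sub>m k)"
proof (induction k)
  case 0
  show ?case by (rule eq_matI) auto
next
  case (Suc k)
  then show ?case
    using A by (simp add: mult_smult_distrib[of _ n n _ n] mult_smult_assoc_mat[of _ n n _ n])
      (rule eq_matI, auto)
qed

lemma spectral_radius_nonneg:
  assumes "A \<in> carrier_mat n n" and "0 < n"
  shows "0 \<le> spectral_radius A"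
  using spectral_radius_mem_max(1)[OF assms] by auto

lemma spectral_radius_smult_le:
  assumes A: "(A :: complex mat) \<in> carrier_mat n n" and n: "0 < n" and s: "0 < s"
  shows "spectral_radius (complex_of_real s \<cdot>\<^sub>m A) \<le> s * spectral_radius A"
proof -
  have sA: "complex_of_real s \<cdot>\<^sub>m A \<in> carrier_mat n n" using A by auto
  obtain \<mu> where mu: "\<mu> \<in> spectrum (complex_of_real s \<cdot>\<^sub>m A)"
    and radius: "spectral_radius (complex_of_real s \<cdot>\<^sub>m A) = norm \<mu>"
    using spectral_radius_mem_max(1)[OF sA n] by auto
  then obtain v where v: "v \<in> carrier_vec n" "v \<noteq> 0\<^sub>v n"
    and eig: "(complex_of_real s \<cdot>\<^sub>m A) *\<^sub>v v = \<mu> \<cdot>\<^sub>v v"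
    unfolding spectrum_def eigenvalue_def eigenvector_def using A by auto
  have "A *\<^sub>v v = (\<mu> / complex_of_real s) \<cdot>\<^sub>v v"
  proof (rule eq_vecI)
    fix i assume "i < dim_vec ((\<mu> / complex_of_real s) \<cdot>\<^sub>v v)"
    then have i: "i < n" using v by auto
    have "complex_of_real s * (row A i \<bullet> v) = \<mu> * v $ i"
      using arg_cong[OF eig, of "\<lambda>w. w $ i"] i A v
      by (auto simp: scalar_prod_def sum_distrib_left algebra_simps)
    then show "(A *\<^sub>v v) $ i = ((\<mu> / complex_of_real s) \<cdot>\<^sub>v v) $ i"
      using i A v s by (auto simp: field_simps)
  qed (use A v in auto)
  then have "norm (\<mu> / complex_of_real s) \<in> norm ` spectrum A"
    unfolding spectrum_def eigenvalue_def eigenvector_def using A v by auto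
  then have "norm \<mu> / s \<le> spectral_radius A"
    using spectral_radius_mem_max(2)[OF A n] s by (simp add: norm_divide)
  then show ?thesis using radius s by (simp add: field_simps)
qed

text \<open>Rescaling by a factor strictly between \<open>x\<close> and \<open>1 / rho A\<close> reduces the claim to the
  uniform bound on the powers of a matrix of spectral radius below 1.\<close>
lemma pow_mat_entries_geometric_bound:
  assumes A: "A \<in> carrier_mat n n" and n: "0 < n" and x: "0 < x" and xr: "x * rho A < 1"
  obtains C s where "x < s" "\<And>k i j. i < n \<Longrightarrow> j < n \<Longrightarrow> \<bar>(A ^\<^sub>m k) $$ (i,j)\<bar> \<le> C / s^k"
proof -
  define Ac where "Ac = map_mat complex_of_real A"
  have Ac: "Ac \<in> carrier_mat n n" using A unfolding Ac_def by auto
  define r where "r = spectral_radius Ac"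
  have r: "0 \<le> r" "x * r < 1"
    using spectral_radius_nonneg[OF Ac n] xr unfolding r_def rho_def Ac_def by auto
  define s where "s = 2 * x / (1 + x * r)"
  have pos: "0 < 1 + x * r" using r x by (simp add: add_pos_nonneg)
  have s: "0 < s" "x < s" "s * r < 1"
    unfolding s_def using x pos r by (auto simp: field_simps)
  define Bc where "Bc = complex_of_real s \<cdot>\<^sub>m Ac"
  have Bc: "Bc \<in> carrier_mat n n" using Ac unfolding Bc_def by auto
  have "spectral_radius Bc < 1"
    using spectral_radius_smult_le[OF Ac n s(1)] s(3) unfolding Bc_def r_def by simp
  then obtain C where C: "\<And>k. norm_bound (Bc ^\<^sub>m k) C"
    using spectral_radius_jnf_norm_bound_less_1_upper_triangular[OF Bc] by auto
  have "\<bar>(A ^\<^sub>m k) $$ (i,j)\<bar> \<le> C / s^k" if i: "i < n" and j: "j < n" for k i j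
  proof -
    have "Ac ^\<^sub>m k = map_mat complex_of_real (A ^\<^sub>m k)"
      unfolding Ac_def by (rule of_real_hom.mat_hom_pow[OF A, symmetric])
    then have "Bc ^\<^sub>m k = (complex_of_real s ^ k) \<cdot>\<^sub>m map_mat complex_of_real (A ^\<^sub>m k)"
      unfolding Bc_def smult_pow_mat[OF Ac] by simp
    then have "(Bc ^\<^sub>m k) $$ (i,j) = complex_of_real (s^k * (A ^\<^sub>m k) $$ (i,j))"
      using i j A by simp
    moreover have "norm ((Bc ^\<^sub>m k) $$ (i,j)) \<le> C"
      using C[of k] i j Bc unfolding norm_bound_def by auto
    ultimately have "s^k * \<bar>(A ^\<^sub>m k) $$ (i,j)\<bar> \<le> C"
      using s by (simp add: abs_mult norm_mult norm_power)
    then show ?thesis using s by (simp add: field_simps)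
  qed
  with s(2) show ?thesis using that by blast
qed

lemma summable_mult_pow_mat_entry:
  fixes f :: "nat \<Rightarrow> real"
  assumes A: "A \<in> carrier_mat n n" and ij: "i < n" "j < n"
    and x: "0 < x" "x * rho A < 1" and f: "\<And>k. \<bar>f k\<bar> \<le> K * x^k"
  shows "summable (\<lambda>k. f k * (A ^\<^sub>m k) $$ (i,j))"
proof -
  obtain C s where "x < s" "\<And>k. \<bar>(A ^\<^sub>m k) $$ (i,j)\<bar> \<le> C / s^k"
    using pow_mat_entries_geometric_bound[OF A _ x] ij by (metis gr_zeroI not_less0)
  then show ?thesis using x by (intro summable_mult_of_geometric_bounds[OF f]) auto
qed

lemma neumann_series_left_inverse:
  fixes A :: "real mat"
  assumes A: "A \<in> carrier_mat n n"
    and summ: "\<And>l i. l < n \<Longrightarrow> i < n \<Longrightarrow> summable (\<lambda>k. b^k * (A ^\<^sub>m k) $$ (l,i))"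
  shows "mat n n (\<lambda>(l,i). \<Sum>k. b^k * (A ^\<^sub>m k) $$ (l,i)) * (1\<^sub>m n - b \<cdot>\<^sub>m A) = 1\<^sub>m n"
    (is "?N * _ = _")
proof (rule eq_matI)
  fix l i assume "l < dim_row (1\<^sub>m n :: real mat)" and "i < dim_col (1\<^sub>m n :: real mat)"
  then have l: "l < n" and i: "i < n" by auto
  define N where "N m = (\<Sum>k. b^k * (A ^\<^sub>m k) $$ (l,m))" for m
  have pow_Suc: "(A ^\<^sub>m Suc k) $$ (l,i) = (\<Sum>m<n. (A ^\<^sub>m k) $$ (l,m) * A $$ (m,i))" for k
    using A l i by (simp add: scalar_prod_def lessThan_atLeast0)
  have summ_Suc: "summable (\<lambda>k. \<Sum>m<n. b^k * (A ^\<^sub>m k) $$ (l,m) * A $$ (m,i))"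
    using summ l by (intro summable_sum summable_mult2) auto
  have "(?N * (1\<^sub>m n - b \<cdot>\<^sub>m A)) $$ (l,i) = (\<Sum>m<n. N m * ((if m = i then 1 else 0) - b * A $$ (m,i)))"
    using A l i by (simp add: scalar_prod_def lessThan_atLeast0 N_def)
  also have "\<dots> = N i - b * (\<Sum>m<n. N m * A $$ (m,i))"
    using i by (simp add: algebra_simps sum_subtractf sum_distrib_left if_distrib[where f="\<lambda>t. _ * t"]
        sum.delta' cong: if_cong)
  also have "(\<Sum>m<n. N m * A $$ (m,i)) = (\<Sum>m<n. \<Sum>k. b^k * (A ^\<^sub>m k) $$ (l,m) * A $$ (m,i))"
    unfolding N_def by (intro sum.cong refl, subst suminf_mult2) (use summ l in auto)
  also have "\<dots> = (\<Sum>k. \<Sum>m<n. b^k * (A ^\<^sub>m k) $$ (l,m) * A $$ (m,i))"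
    by (rule suminf_sum[symmetric]) (use summ l in \<open>auto intro: summable_mult2\<close>)
  also have "\<dots> = (\<Sum>k. b^k * (A ^\<^sub>m Suc k) $$ (l,i))"
    by (simp only: pow_Suc sum_distrib_left mult.assoc)
  also have "b * \<dots> = (\<Sum>k. b^Suc k * (A ^\<^sub>m Suc k) $$ (l,i))"
    using summ_Suc by (subst suminf_mult[symmetric]) (simp_all only: pow_Suc sum_distrib_left mult.assoc power_Suc)
  also have "N i = 1\<^sub>m n $$ (l,i) + (\<Sum>k. b^Suc k * (A ^\<^sub>m Suc k) $$ (l,i))"
    unfolding N_def using suminf_split_head[OF summ[OF l i]] carrier_matD(1)[OF A] l i by simp
  finally show "(?N * (1\<^sub>m n - b \<cdot>\<^sub>m A)) $$ (l,i) = 1\<^sub>m n $$ (l,i)" using l i by (simp add: case_prod_unfold)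
qed (use A in auto)

lemma the_mat_inverse_eq_left_inverse:
  fixes M N :: "'a :: field mat"
  assumes M: "M \<in> carrier_mat n n" and N: "N \<in> carrier_mat n n" and NM: "N * M = 1\<^sub>m n"
  shows "the (mat_inverse M) = N"
proof -
  have MN: "M * N = 1\<^sub>m n" by (rule mat_mult_left_right_inverse[OF N M NM])
  then have "det M \<noteq> 0" using det_mult[OF M N] by auto
  then have "M \<in> Units (ring_mat TYPE('a) n ())" by (rule det_non_zero_imp_unit[OF M])
  then obtain X where X: "mat_inverse M = Some X" using mat_inverse(1)[OF M, where b="()"] by (cases "mat_inverse M") auto
  then have XM: "X * M = 1\<^sub>m n" and X': "X \<in> carrier_mat n n" using mat_inverse(2)[OF M] by auto
  have "X = X * (M * N)" using MN X' by simp
  also have "\<dots> = (X * M) * N" by (rule assoc_mult_mat[OF X' M N, symmetric])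
  finally show ?thesis using X XM N by simp
qed

lemma column_stochastic_one: "column_stochastic n (1\<^sub>m n)"
  unfolding column_stochastic_def by (auto simp: sum.delta)

lemma column_stochastic_mult:
  assumes X: "column_stochastic n X" and Y: "column_stochastic n Y"
  shows "column_stochastic n (X * Y)"
proof -
  have carrier: "X \<in> carrier_mat n n" "Y \<in> carrier_mat n n"
    using X Y unfolding column_stochastic_def by auto
  have entry: "(X * Y) $$ (i,j) = (\<Sum>m<n. X $$ (i,m) * Y $$ (m,j))" if "i < n" "j < n" for i j
    using carrier that by (simp add: scalar_prod_def lessThan_atLeast0)
  have "(\<Sum>i<n. (X * Y) $$ (i,j)) = 1" if j: "j < n" for j
  proof -
    have "(\<Sum>i<n. (X * Y) $$ (i,j)) = (\<Sum>m<n. (\<Sum>i<n. X $$ (i,m)) * Y $$ (m,j))"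
      using j by (simp add: entry sum_distrib_right) (rule sum.swap)
    also have "\<dots> = 1" using X Y j unfolding column_stochastic_def by simp
    finally show ?thesis .
  qed
  moreover have "0 \<le> (X * Y) $$ (i,j)" if "i < n" "j < n" for i j
    using X Y that unfolding entry[OF that] column_stochastic_def by (auto intro!: sum_nonneg)
  ultimately show ?thesis using carrier unfolding column_stochastic_def by auto
qed

lemma column_stochastic_pow:
  assumes "column_stochastic n X"
  shows "column_stochastic n (X ^\<^sub>m k)"
proof (induction k)
  case 0
  then show ?case
    using assms column_stochastic_one unfolding column_stochastic_def by auto
next
  case (Suc k)
  then show ?case using column_stochastic_mult[OF Suc assms] by simp
qed

lemma column_stochastic_weighted_sum_neg:
  assumes V: "column_stochastic n V" and g: "g < n" and f: "\<And>i. i < n \<Longrightarrow> f i < 0"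
  shows "(\<Sum>i<n. V $$ (i,g) * f i) < 0"
proof -
  define m where "m = Max (f ` {..<n})"
  have "m \<in> f ` {..<n}" unfolding m_def using g by (intro Max_in) auto
  then have m: "m < 0" "\<And>i. i < n \<Longrightarrow> f i \<le> m"
    using f unfolding m_def by auto
  have "(\<Sum>i<n. V $$ (i,g) * f i) \<le> (\<Sum>i<n. V $$ (i,g) * m)"
    using V g m(2) unfolding column_stochastic_def by (intro sum_mono mult_left_mono) auto
  also have "\<dots> = m" using V g unfolding column_stochastic_def by (simp add: sum_distrib_right[symmetric])
  finally show ?thesis using m(1) by simp
qed

locale channel_model =
  fixes n :: nat and a abar c Mbar B :: real and P1 :: "real mat" and e :: "real vec"
  assumes n_pos: "0 < n" and a2_gt_1: "1 < a^2" and abar_lt_c: "abar^2 < c^2" and c2_lt_1: "c^2 < 1"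
    and Mbar_nonneg: "0 \<le> Mbar" and B_pos: "0 < B"
    and P1: "column_stochastic n P1" and e_range: "\<forall>i<n. 0 \<le> e $ i \<and> e $ i \<le> 1"
    and rho_PE: "a^2 * rho (P1 * diagE n e) < 1"
begin

definition PE :: "real mat" where "PE = P1 * diagE n e"

text \<open>\<open>reception_weight k i\<close> is \<open>d\<^sup>T (P\<^sub>1 E)\<^sup>k \<delta>\<^sub>i\<close>: the probability that, with the channel
  in state \<open>i\<close> at the first transmission, exactly \<open>k\<close> packets are dropped before one is received.\<close>
definition reception_weight :: "nat \<Rightarrow> nat \<Rightarrow> real" where
  "reception_weight k i = (\<Sum>l<n. dvec n e $ l * (PE ^\<^sub>m k) $$ (l,i))"

abbreviation H :: "nat \<Rightarrow> real \<Rightarrow> real" where "H \<equiv> Hfun a abar c Mbar B"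

abbreviation Q :: "nat \<Rightarrow> real vec" where "Q \<equiv> Qvec n a abar c Mbar B P1 e"

text \<open>The evaluation function conditioned on the channel state \<open>i\<close> at the first transmission,
  with \<open>y\<close> standing for \<open>x\<^sup>2\<close>.\<close>
definition Jstate :: "nat \<Rightarrow> nat \<Rightarrow> real \<Rightarrow> real" where
  "Jstate \<theta> i y = (\<Sum>k. H (k + \<theta>) y * reception_weight k i)"

definition Qterm :: "nat \<Rightarrow> nat \<Rightarrow> real" where
  "Qterm D k = B / c^(2*D) * ((abar^2)^(k+D) - (c^2)^(k+D)) + Mbar * ((a^2)^(k+D) - 1)"

lemma P1_carrier: "P1 \<in> carrier_mat n n"
  using P1 unfolding column_stochastic_def by auto

lemma PE_carrier [simp]: "PE \<in> carrier_mat n n"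
  unfolding PE_def diagE_def using P1_carrier by auto

lemma PE_dim [simp]: "dim_row PE = n" "dim_col PE = n"
  by (fact carrier_matD[OF PE_carrier])+

lemma PE_entry: "l < n \<Longrightarrow> i < n \<Longrightarrow> PE $$ (l,i) = P1 $$ (l,i) * e $ i"
  unfolding PE_def diagE_def using P1_carrier
  by (simp add: scalar_prod_def lessThan_atLeast0 if_distrib[where f="\<lambda>t. _ * t"] sum.delta'
      cong: if_cong)

lemma PE_nonneg: "l < n \<Longrightarrow> i < n \<Longrightarrow> 0 \<le> PE $$ (l,i)"
  using P1 e_range unfolding PE_entry column_stochastic_def by auto

lemma PE_column_sum: "i < n \<Longrightarrow> (\<Sum>l<n. PE $$ (l,i)) = e $ i"
  using P1 unfolding column_stochastic_def by (simp add: PE_entry sum_distrib_right[symmetric])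

lemma pow_PE_Suc_entry:
  "l < n \<Longrightarrow> i < n \<Longrightarrow> (PE ^\<^sub>m Suc k) $$ (l,i) = (\<Sum>m<n. (PE ^\<^sub>m k) $$ (l,m) * PE $$ (m,i))"
  by (simp add: scalar_prod_def lessThan_atLeast0)

lemma pow_PE_nonneg: "l < n \<Longrightarrow> i < n \<Longrightarrow> 0 \<le> (PE ^\<^sub>m k) $$ (l,i)"
proof (induction k arbitrary: l i)
  case (Suc k)
  then show ?case
    by (simp only: pow_PE_Suc_entry) (auto intro!: sum_nonneg mult_nonneg_nonneg PE_nonneg)
qed simp

lemma reception_weight_nonneg: "i < n \<Longrightarrow> 0 \<le> reception_weight k i"
  using e_range unfolding reception_weight_def dvec_def
  by (auto intro!: sum_nonneg mult_nonneg_nonneg pow_PE_nonneg)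

lemma reception_weight_Suc:
  assumes "i < n"
  shows "reception_weight (Suc k) i = (\<Sum>m<n. reception_weight k m * PE $$ (m,i))"
proof -
  have "reception_weight (Suc k) i
      = (\<Sum>l<n. \<Sum>m<n. dvec n e $ l * (PE ^\<^sub>m k) $$ (l,m) * PE $$ (m,i))"
    unfolding reception_weight_def using assms
    by (intro sum.cong refl) (simp only: pow_PE_Suc_entry sum_distrib_left mult.assoc lessThan_iff)
  then show ?thesis
    unfolding reception_weight_def by (subst (asm) sum.swap) (simp add: sum_distrib_right)
qed

lemma summable_mult_pow_PE:
  assumes "l < n" "i < n" and f: "\<And>k. \<bar>f k\<bar> \<le> K * (a^2)^k"
  shows "summable (\<lambda>k. f k * (PE ^\<^sub>m k) $$ (l,i))"
  using assms a2_gt_1 rho_PE[folded PE_def] by (intro summable_mult_pow_mat_entry[OF PE_carrier _ _ _ _ f]) auto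

lemma summable_mult_reception_weight:
  assumes "i < n" and f: "\<And>k. \<bar>f k\<bar> \<le> K * (a^2)^k"
  shows "summable (\<lambda>k. f k * reception_weight k i)"
proof -
  have "summable (\<lambda>k. \<Sum>l<n. dvec n e $ l * (f k * (PE ^\<^sub>m k) $$ (l,i)))"
    using assms by (intro summable_sum summable_mult summable_mult_pow_PE[OF _ _ f]) auto
  then show ?thesis
    unfolding reception_weight_def by (simp add: sum_distrib_left mult_ac)
qed

lemma summable_power_pow_PE:
  "\<bar>b\<bar> \<le> a^2 \<Longrightarrow> l < n \<Longrightarrow> i < n \<Longrightarrow> summable (\<lambda>k. b^k * (PE ^\<^sub>m k) $$ (l,i))"
  by (rule summable_mult_pow_PE[where K=1]) (auto simp: power_abs power_mono)

lemma inverse_one_minus_smult_PE: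
  assumes "\<bar>b\<bar> \<le> a^2"
  shows "the (mat_inverse (1\<^sub>m n - b \<cdot>\<^sub>m PE)) = mat n n (\<lambda>(l,i). \<Sum>k. b^k * (PE ^\<^sub>m k) $$ (l,i))"
  using neumann_series_left_inverse[OF PE_carrier summable_power_pow_PE[OF assms]]
  by (intro the_mat_inverse_eq_left_inverse) auto

lemma power_times_reception_weight_sums:
  assumes b: "\<bar>b\<bar> \<le> a^2" and i: "i < n"
  shows "(\<lambda>k. b^\<theta> * (b^k * reception_weight k i)) sums (Zvec n P1 e \<theta> b $ i)"
proof -
  have "Zvec n P1 e \<theta> b $ i = b^\<theta> * (\<Sum>l<n. (\<Sum>k. b^k * (PE ^\<^sub>m k) $$ (l,i)) * dvec n e $ l)"
    unfolding Zvec_def PE_def[symmetric] inverse_one_minus_smult_PE[OF b] using i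
    by (simp add: scalar_prod_def lessThan_atLeast0 dvec_def)
  moreover have "(\<lambda>k. b^k * reception_weight k i)
      sums (\<Sum>l<n. (\<Sum>k. b^k * (PE ^\<^sub>m k) $$ (l,i)) * dvec n e $ l)"
  proof -
    have "(\<lambda>k. \<Sum>l<n. b^k * (PE ^\<^sub>m k) $$ (l,i) * dvec n e $ l)
        sums (\<Sum>l<n. (\<Sum>k. b^k * (PE ^\<^sub>m k) $$ (l,i)) * dvec n e $ l)"
      using summable_power_pow_PE[OF b _ i] by (intro sums_sum sums_mult2 summable_sums) auto
    then show ?thesis unfolding reception_weight_def by (simp add: sum_distrib_left mult_ac)
  qed
  ultimately show ?thesis by (simp add: sums_mult)
qed

lemma Qterm_sums:
  assumes i: "i < n"
  shows "(\<lambda>k. Qterm D k * reception_weight k i) sums (Q D $ i)"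
proof -
  have bounds: "\<bar>abar^2\<bar> \<le> a^2" "\<bar>c^2\<bar> \<le> a^2" "\<bar>a^2\<bar> \<le> a^2" "\<bar>1::real\<bar> \<le> a^2"
    using abar_lt_c c2_lt_1 a2_gt_1 by auto
  note Z = power_times_reception_weight_sums[OF bounds(1) i, of D]
    power_times_reception_weight_sums[OF bounds(2) i, of D]
    power_times_reception_weight_sums[OF bounds(3) i, of D]
    power_times_reception_weight_sums[OF bounds(4) i, of D]
  have dim: "dim_vec (Zvec n P1 e D b) = n" if "\<bar>b\<bar> \<le> a^2" for b
    unfolding Zvec_def PE_def[symmetric] inverse_one_minus_smult_PE[OF that] by simp
  have series: "(\<lambda>k. Qterm D k * reception_weight k i) = (\<lambda>k. B / c^(2*D) *
        ((abar^2)^D * ((abar^2)^k * reception_weight k i) - (c^2)^D * ((c^2)^k * reception_weight k i))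
      + Mbar * ((a^2)^D * ((a^2)^k * reception_weight k i) - 1^D * (1^k * reception_weight k i)))"
    unfolding Qterm_def by (simp add: power_add algebra_simps)
  have Q_i: "Q D $ i
      = B / c^(2*D) * (Zvec n P1 e D (abar^2) $ i - Zvec n P1 e D (c^2) $ i)
        + Mbar * (Zvec n P1 e D (a^2) $ i - Zvec n P1 e D 1 $ i)"
    unfolding Qvec_def using i dim[OF bounds(1)] dim[OF bounds(2)] dim[OF bounds(3)] dim[OF bounds(4)]
    by simp
  show ?thesis
    unfolding series Q_i
    by (rule sums_add[OF sums_mult[OF sums_diff[OF Z(1,2)]] sums_mult[OF sums_diff[OF Z(3,4)]]])
qed

lemma c2_pos: "0 < c^2"
  using abar_lt_c by (smt (verit) zero_le_power2)

lemma H_eq: "H w y = (abar^2)^w * y + Mbar * ((a^2)^w - 1) - max ((c^2)^w * y) B"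
  unfolding Hfun_def by (simp add: power_mult)

lemma abs_H_le:
  assumes y: "0 \<le> y"
  shows "\<bar>H w y\<bar> \<le> (2*y + B + 2*Mbar) * (a^2)^w"
proof -
  have abar: "(abar^2)^w \<le> 1" and c: "(c^2)^w \<le> 1" and a: "1 \<le> (a^2)^w"
    using abar_lt_c c2_lt_1 a2_gt_1 by (auto intro: power_le_one one_le_power)
  have "\<bar>(abar^2)^w * y\<bar> \<le> y" using abar y by (simp add: abs_mult mult_left_le_one_le)
  moreover have "\<bar>Mbar * ((a^2)^w - 1)\<bar> \<le> Mbar * (a^2)^w"
    using a Mbar_nonneg mult_left_mono[OF a Mbar_nonneg] by (subst abs_of_nonneg) (simp_all add: algebra_simps)
  moreover have "\<bar>max ((c^2)^w * y) B\<bar> \<le> y + B"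
    using c y B_pos mult_left_le_one_le[of y "(c^2)^w"] by (auto simp: max_def)
  ultimately have "\<bar>H w y\<bar> \<le> y + Mbar * (a^2)^w + (y + B)" unfolding H_eq by linarith
  moreover have "(2*y + B) * 1 \<le> (2*y + B) * (a^2)^w" using a y B_pos by (intro mult_left_mono) auto
  moreover have "0 \<le> Mbar * (a^2)^w" using a Mbar_nonneg by simp
  ultimately show ?thesis by (simp add: algebra_simps)
qed

lemma summable_H_times_reception_weight:
  assumes "i < n" "0 \<le> y"
  shows "summable (\<lambda>k. H (k + \<theta>) y * reception_weight k i)"
proof (rule summable_mult_reception_weight[OF \<open>i < n\<close>])
  show "\<bar>H (k + \<theta>) y\<bar> \<le> (2*y + B + 2*Mbar) * (a^2)^\<theta> * (a^2)^k" for k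
    using abs_H_le[OF \<open>0 \<le> y\<close>, of "k + \<theta>"] by (simp add: power_add mult_ac)
qed

lemma H_le: "0 \<le> y \<Longrightarrow> H w y \<le> Mbar * (a^2)^w"
  using abar_lt_c mult_right_mono[of "(abar^2)^w" "(c^2)^w" y] Mbar_nonneg unfolding H_eq
  by (auto simp: power_mono right_diff_distrib max_def)

lemma H_rescaled:
  "H (k + t) (y0 / (c^2)^t)
    = (abar^2)^k * y0 * (abar^2 / c^2)^t + Mbar * ((a^2)^k * (a^2)^t - 1) - max ((c^2)^k * y0) B"
  using c2_pos unfolding H_eq by (simp add: power_add power_divide field_simps)

text \<open>After the substitution \<open>y = y\<^sub>0 / c\<^sup>2\<^sup>\<theta>\<close>, the term \<open>H (k + \<theta>) y\<close> is a positive combination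
  of exponentials in \<open>\<theta>\<close> minus a constant, hence convex in \<open>\<theta>\<close>.\<close>
lemma H_convex_interpolation:
  assumes "\<theta> \<le> D" and y0: "0 \<le> y0"
  shows "real D * H (k + \<theta>) (y0 / (c^2)^\<theta>)
    \<le> real (D - \<theta>) * H (k + 0) (y0 / (c^2)^0) + real \<theta> * H (k + D) (y0 / (c^2)^D)"
proof -
  define r where "r = abar^2 / c^2"
  define \<alpha> where "\<alpha> = (abar^2)^k * y0"
  define \<beta> where "\<beta> = Mbar * (a^2)^k"
  define \<gamma> where "\<gamma> = Mbar + max ((c^2)^k * y0) B"
  have H: "H (k + t) (y0 / (c^2)^t) = \<alpha> * r^t + \<beta> * (a^2)^t - \<gamma>" for t
    unfolding H_rescaled r_def \<alpha>_def \<beta>_def \<gamma>_def by (simp add: algebra_simps)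
  have "\<alpha> * (real D * r^\<theta>) \<le> \<alpha> * (real (D - \<theta>) + real \<theta> * r^D)"
    using power_le_convex_interpolation[OF _ \<open>\<theta> \<le> D\<close>, of r] c2_pos y0
    by (intro mult_left_mono) (auto simp: r_def \<alpha>_def)
  moreover have "\<beta> * (real D * (a^2)^\<theta>) \<le> \<beta> * (real (D - \<theta>) + real \<theta> * (a^2)^D)"
    using power_le_convex_interpolation[OF _ \<open>\<theta> \<le> D\<close>, of "a^2"] Mbar_nonneg
    by (intro mult_left_mono) (auto simp: \<beta>_def)
  ultimately show ?thesis
    unfolding H using \<open>\<theta> \<le> D\<close> by (simp add: of_nat_diff algebra_simps)
qed

lemma Jstate_convex_interpolation:
  assumes "\<theta> \<le> D" and y0: "0 \<le> y0" and i: "i < n"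
  shows "real D * Jstate \<theta> i (y0 / (c^2)^\<theta>)
    \<le> real (D - \<theta>) * Jstate 0 i y0 + real \<theta> * Jstate D i (y0 / (c^2)^D)"
proof -
  have y: "0 \<le> y0 / (c^2)^t" for t using y0 c2_pos by simp
  note summ = summable_H_times_reception_weight[OF i y]
  have summ0: "summable (\<lambda>k. H k y0 * reception_weight k i)"
    using summable_H_times_reception_weight[OF i y0, of 0] by simp
  have "real D * Jstate \<theta> i (y0 / (c^2)^\<theta>)
      = (\<Sum>k. real D * (H (k + \<theta>) (y0 / (c^2)^\<theta>) * reception_weight k i))"
    unfolding Jstate_def by (rule suminf_mult[OF summ, symmetric])
  also have "\<dots> \<le> (\<Sum>k. real (D - \<theta>) * (H (k + 0) y0 * reception_weight k i)
      + real \<theta> * (H (k + D) (y0 / (c^2)^D) * reception_weight k i))"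
  proof (rule suminf_le)
    fix k
    have "real D * H (k + \<theta>) (y0 / (c^2)^\<theta>) * reception_weight k i
      \<le> (real (D - \<theta>) * H (k + 0) (y0 / (c^2)^0) + real \<theta> * H (k + D) (y0 / (c^2)^D))
        * reception_weight k i"
      by (rule mult_right_mono[OF H_convex_interpolation[OF assms(1,2)] reception_weight_nonneg[OF i]])
    then show "real D * (H (k + \<theta>) (y0 / (c^2)^\<theta>) * reception_weight k i)
      \<le> real (D - \<theta>) * (H (k + 0) y0 * reception_weight k i)
        + real \<theta> * (H (k + D) (y0 / (c^2)^D) * reception_weight k i)"
      by (simp add: algebra_simps)
  qed (use summ summ0 in \<open>auto intro!: summable_mult summable_add\<close>)
  also have "\<dots> = real (D - \<theta>) * Jstate 0 i y0 + real \<theta> * Jstate D i (y0 / (c^2)^D)"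
    unfolding Jstate_def using summ summ0
    by (subst suminf_add[symmetric]) (auto intro!: summable_mult simp: suminf_mult)
  finally show ?thesis .
qed

lemma H_le_Qterm:
  assumes y0: "0 \<le> y0"
  shows "H (k + D) (y0 / (c^2)^D) \<le> Qterm D k"
proof -
  define p where "p = (abar^2)^k * (abar^2 / c^2)^D"
  have ratio: "0 \<le> abar^2 / c^2" "abar^2 / c^2 \<le> 1" using c2_pos abar_lt_c by auto
  have "p \<le> (abar^2)^k" unfolding p_def using ratio by (simp add: mult_left_le power_le_one)
  also have "\<dots> \<le> (c^2)^k" using abar_lt_c by (simp add: power_mono)
  finally have p: "0 \<le> p" "p \<le> (c^2)^k" using ratio unfolding p_def by auto
  have "c^(2*D) = (c^2)^D" "(c^2)^D \<noteq> 0" using c2_pos by (auto simp: power_mult)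
  then have "Qterm D k = B * p - B * (c^2)^k + Mbar * ((a^2)^k * (a^2)^D - 1)"
    unfolding Qterm_def p_def by (simp add: power_add power_divide field_simps)
  moreover have "H (k + D) (y0 / (c^2)^D) = p * y0 + Mbar * ((a^2)^k * (a^2)^D - 1) - max ((c^2)^k * y0) B"
    unfolding H_rescaled p_def by (simp add: algebra_simps)
  moreover have "(c^2)^k \<le> 1" using c2_lt_1 by (simp add: power_le_one)
  ultimately show ?thesis using mult_sub_max_le[OF p _ y0 B_pos] by simp
qed

lemma Jstate_le_Q:
  assumes "0 \<le> y0" "i < n"
  shows "Jstate D i (y0 / (c^2)^D) \<le> Q D $ i"
proof -
  have "0 \<le> y0 / (c^2)^D" using assms c2_pos by simp
  then show ?thesis
    unfolding Jstate_def sums_unique[OF Qterm_sums[OF \<open>i < n\<close>]]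
    using summable_H_times_reception_weight[OF \<open>i < n\<close>] sums_summable[OF Qterm_sums[OF \<open>i < n\<close>]]
      H_le_Qterm[OF \<open>0 \<le> y0\<close>] reception_weight_nonneg[OF \<open>i < n\<close>]
    by (intro suminf_le) (auto intro: mult_right_mono)
qed

text \<open>The first summand of \<open>Jstate 0\<close> is \<open>H 0 y \<le> 0\<close>; the rest is \<open>Jstate 1\<close> propagated one
  step through \<open>P\<^sub>1 E\<close>.\<close>
lemma Jstate_0_le:
  assumes y: "0 \<le> y" and i: "i < n"
  shows "Jstate 0 i y \<le> (\<Sum>m<n. PE $$ (m,i) * Jstate 1 m y)"
proof -
  have summ: "summable (\<lambda>k. H (k + \<theta>) y * reception_weight k m)" if "m < n" for m \<theta>
    using summable_H_times_reception_weight[OF that y] .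
  have "(\<Sum>k. H (Suc k) y * reception_weight (Suc k) i)
      = (\<Sum>k. \<Sum>m<n. PE $$ (m,i) * (H (k + 1) y * reception_weight k m))"
    using i by (intro suminf_cong) (simp add: reception_weight_Suc sum_distrib_left algebra_simps)
  also have "\<dots> = (\<Sum>m<n. \<Sum>k. PE $$ (m,i) * (H (k + 1) y * reception_weight k m))"
  proof (rule suminf_sum)
    fix m assume "m \<in> {..<n}"
    then show "summable (\<lambda>k. PE $$ (m,i) * (H (k + 1) y * reception_weight k m))"
      using summ[where \<theta>=1] by (intro summable_mult) simp
  qed
  also have "\<dots> = (\<Sum>m<n. PE $$ (m,i) * Jstate 1 m y)"
    unfolding Jstate_def by (intro sum.cong refl suminf_mult summ) simp
  finally have "Jstate 0 i y = H 0 y * reception_weight 0 i + (\<Sum>m<n. PE $$ (m,i) * Jstate 1 m y)"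
    unfolding Jstate_def using suminf_split_head[OF summ[OF i, of 0]] by simp
  moreover have "H 0 y * reception_weight 0 i \<le> 0"
    using reception_weight_nonneg[OF i] by (intro mult_nonpos_nonneg) (auto simp: H_eq)
  ultimately show ?thesis by simp
qed

lemma Jstate_1_bdd_above: "bdd_above {Jstate 1 l y | l y. l < n \<and> 0 \<le> y}"
proof -
  define G where "G l = (\<Sum>k. Mbar * (a^2)^(k + 1) * reception_weight k l)" for l
  have "Jstate 1 l y \<le> (\<Sum>j<n. \<bar>G j\<bar>)" if l: "l < n" and y: "0 \<le> y" for l y
  proof -
    have "Jstate 1 l y \<le> G l"
      unfolding Jstate_def G_def
    proof (rule suminf_le)
      show "H (k + 1) y * reception_weight k l \<le> Mbar * (a^2)^(k + 1) * reception_weight k l" for k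
        by (rule mult_right_mono[OF H_le[OF y] reception_weight_nonneg[OF l]])
      show "summable (\<lambda>k. Mbar * (a^2)^(k + 1) * reception_weight k l)"
        by (rule summable_mult_reception_weight[OF l, of _ "Mbar * a^2"]) (use Mbar_nonneg in simp)
    qed (rule summable_H_times_reception_weight[OF l y])
    also have "\<dots> \<le> (\<Sum>j<n. \<bar>G j\<bar>)"
      using member_le_sum[of l "{..<n}" "\<lambda>j. \<bar>G j\<bar>"] l by simp
    finally show ?thesis .
  qed
  then show ?thesis unfolding bdd_above_def by blast
qed

lemma Jstate_interpolation_bound:
  assumes "\<theta> \<le> D" "i < n" "0 \<le> y"
    and U: "0 \<le> U" "\<And>l y. l < n \<Longrightarrow> 0 \<le> y \<Longrightarrow> Jstate 1 l y \<le> U"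
    and Qm: "\<And>i. i < n \<Longrightarrow> Q D $ i \<le> Qm"
  shows "real D * Jstate \<theta> i y \<le> real (D - \<theta>) * U + real \<theta> * Qm"
proof -
  define y0 where "y0 = y * (c^2)^\<theta>"
  have y0: "0 \<le> y0" "y = y0 / (c^2)^\<theta>" unfolding y0_def using assms(3) c2_pos by auto
  have "Jstate 0 i y0 \<le> (\<Sum>m<n. PE $$ (m,i) * Jstate 1 m y0)"
    by (rule Jstate_0_le[OF y0(1) \<open>i < n\<close>])
  also have "\<dots> \<le> (\<Sum>m<n. PE $$ (m,i) * U)"
    using U(2)[OF _ y0(1)] PE_nonneg[OF _ \<open>i < n\<close>] by (intro sum_mono mult_left_mono) auto
  also have "\<dots> = e $ i * U" using PE_column_sum[OF \<open>i < n\<close>] by (simp add: sum_distrib_right[symmetric])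
  also have "\<dots> \<le> U" using e_range \<open>i < n\<close> U(1) by (simp add: mult_left_le_one_le)
  finally have "real (D - \<theta>) * Jstate 0 i y0 \<le> real (D - \<theta>) * U" by (intro mult_left_mono) auto
  moreover have "real \<theta> * Jstate D i (y0 / (c^2)^D) \<le> real \<theta> * Qm"
    using Jstate_le_Q[OF y0(1) \<open>i < n\<close>, of D] Qm[OF \<open>i < n\<close>] by (intro mult_left_mono) auto
  ultimately show ?thesis
    using Jstate_convex_interpolation[OF \<open>\<theta> \<le> D\<close> y0(1) \<open>i < n\<close>] unfolding y0(2) by linarith
qed

text \<open>If the supremum \<open>S\<close> of \<open>Jstate 1\<close> were nonnegative, the interpolation bound with
  \<open>\<theta> = 1\<close> and \<open>U = S\<close> would give \<open>D S \<le> (D - 1) S + max\<^sub>i Q\<^sub>i\<close>, i.e. \<open>S < 0\<close>. So \<open>U = 0\<close>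
  is admissible, and the bound then gives the claim for all \<open>\<theta>\<close>.\<close>
lemma Jstate_neg:
  assumes Qneg: "\<And>i. i < n \<Longrightarrow> Q D $ i < 0" and \<theta>: "\<theta> \<in> {1..D}" and "i < n" "0 \<le> y"
  shows "Jstate \<theta> i y < 0"
proof -
  define Qm where "Qm = Max ((\<lambda>i. Q D $ i) ` {..<n})"
  have "Qm \<in> (\<lambda>i. Q D $ i) ` {..<n}" unfolding Qm_def using n_pos by (intro Max_in) auto
  then have Qm: "Qm < 0" "\<And>i. i < n \<Longrightarrow> Q D $ i \<le> Qm" using Qneg unfolding Qm_def by auto
  define T where "T = {Jstate 1 l y | l y. l < n \<and> 0 \<le> y}"
  have T_upper: "Jstate 1 l y \<le> Sup T" if "l < n" "0 \<le> y" for l y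
    using Jstate_1_bdd_above that unfolding T_def by (intro cSup_upper) auto
  have D: "0 < D" using \<theta> by auto
  have "Sup T < 0"
  proof (rule ccontr)
    assume "\<not> Sup T < 0"
    then have S: "0 \<le> Sup T" by simp
    have "Sup T \<le> (real (D - 1) * Sup T + Qm) / real D"
    proof (rule cSup_least)
      show "T \<noteq> {}" unfolding T_def using n_pos by auto
      fix t assume "t \<in> T"
      then obtain l y where "t = Jstate 1 l y" "l < n" "0 \<le> y" unfolding T_def by auto
      then show "t \<le> (real (D - 1) * Sup T + Qm) / real D"
        using Jstate_interpolation_bound[of 1 D l y "Sup T" Qm] S T_upper Qm(2) D
        by (simp add: field_simps)
    qed
    then have "Sup T \<le> Qm" using D by (simp add: of_nat_diff field_simps)
    then show False using S Qm(1) by simp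
  qed
  then have "Jstate 1 l y \<le> 0" if "l < n" "0 \<le> y" for l y
    using T_upper[OF that] by linarith
  then have "real D * Jstate \<theta> i y \<le> real (D - \<theta>) * 0 + real \<theta> * Qm"
    using \<theta> assms(3,4) Qm(2) by (intro Jstate_interpolation_bound) auto
  also have "\<dots> < 0" using Qm(1) \<theta> by (simp add: mult_pos_neg)
  finally show ?thesis using D by (simp add: mult_less_0_iff)
qed

lemma Jfun_eq_sum_Jstate:
  assumes P0: "column_stochastic n P0" and g: "g < n"
  shows "Jfun n a abar c Mbar B P0 P1 e \<theta> x g
    = (\<Sum>i<n. (P0 ^\<^sub>m (\<theta> - 1) * P1) $$ (i,g) * Jstate \<theta> i (x^2))"
proof -
  define V where "V = P0 ^\<^sub>m (\<theta> - 1) * P1"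
  have V: "V \<in> carrier_mat n n"
    using P0 P1_carrier unfolding V_def column_stochastic_def by auto
  define v where "v = V *\<^sub>v unit_vec n g"
  have v: "v \<in> carrier_vec n" "\<And>i. i < n \<Longrightarrow> v $ i = V $$ (i,g)"
    unfolding v_def using V g by auto
  have "dvec n e \<bullet> ((PE ^\<^sub>m k * P0 ^\<^sub>m (\<theta> - 1) * P1) *\<^sub>v unit_vec n g)
      = (\<Sum>i<n. reception_weight k i * V $$ (i,g))" for k
  proof -
    have "PE ^\<^sub>m k * P0 ^\<^sub>m (\<theta> - 1) * P1 = PE ^\<^sub>m k * V"
      unfolding V_def using P0 P1_carrier unfolding column_stochastic_def
      by (simp add: assoc_mult_mat[of _ n n _ n _ n])
    then have "(PE ^\<^sub>m k * P0 ^\<^sub>m (\<theta> - 1) * P1) *\<^sub>v unit_vec n g = PE ^\<^sub>m k *\<^sub>v v"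
      unfolding v_def using V by (simp add: assoc_mult_mat_vec[of _ n n _ n])
    then have "dvec n e \<bullet> ((PE ^\<^sub>m k * P0 ^\<^sub>m (\<theta> - 1) * P1) *\<^sub>v unit_vec n g)
        = (\<Sum>l<n. dvec n e $ l * (\<Sum>i<n. (PE ^\<^sub>m k) $$ (l,i) * V $$ (i,g)))"
      using v by (simp add: scalar_prod_def lessThan_atLeast0 dvec_def)
    also have "\<dots> = (\<Sum>i<n. reception_weight k i * V $$ (i,g))"
      unfolding reception_weight_def by (simp add: sum_distrib_left sum_distrib_right mult.assoc) (rule sum.swap)
    finally show ?thesis .
  qed
  then have "Jfun n a abar c Mbar B P0 P1 e \<theta> x g
      = (\<Sum>k. \<Sum>i<n. V $$ (i,g) * (H (k + \<theta>) (x^2) * reception_weight k i))"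
    unfolding Jfun_def PE_def[symmetric] by (simp add: sum_distrib_left mult_ac)
  also have "\<dots> = (\<Sum>i<n. V $$ (i,g) * Jstate \<theta> i (x^2))"
  proof -
    have "summable (\<lambda>k. H (k + \<theta>) (x^2) * reception_weight k i)" if "i < n" for i
      using summable_H_times_reception_weight[OF that] by simp
    then show ?thesis
      unfolding Jstate_def by (subst suminf_sum) (auto intro!: summable_mult sum.cong suminf_mult)
  qed
  finally show ?thesis unfolding V_def .
qed

end

theorem mainTheorem5:
  fixes n :: nat and a L abar c M Mbar B :: real and P0 P1 :: "real mat" and e :: "real vec"
    and D :: nat
  assumes n: "n \<ge> 1"
    and a: "\<bar>a\<bar> > 1"
    and abar: "abar = a + L" and abar_pos: "0 < abar^2" and abar_lt: "abar^2 < 1"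
    and c1: "abar^2 < c^2" and c2: "c^2 < 1"
    and M: "M > 0" and Bpos: "B > 0" and Mbar: "Mbar = M / (a^2 - 1)"
    and P0: "column_stochastic n P0" and P1: "column_stochastic n P1"
    and e: "e \<in> carrier_vec n" and e01: "\<forall>i<n. 0 \<le> e $ i \<and> e $ i \<le> 1"
    and rho: "a^2 * rho (P1 * diagE n e) < 1"
    and B0: "B \<ge> Mbar * ln (a^2) / ln (c^2 / abar^2)"
    and Q: "\<forall>i<n. Qvec n a abar c Mbar B P1 e D $ i < 0"
  shows "\<forall>\<theta>\<in>{1..D}. \<forall>x::real. \<forall>g<n. Jfun n a abar c Mbar B P0 P1 e \<theta> x g < 0"
proof (intro ballI allI impI)
  fix \<theta> x g assume \<theta>: "\<theta> \<in> {1..D}" and g: "g < n"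
  have "1 * 1 < \<bar>a\<bar> * \<bar>a\<bar>" using a by (intro mult_strict_mono) auto
  then have a2: "1 < a^2" by (simp add: power2_eq_square)
  interpret channel_model n a abar c Mbar B P1 e
    using n a2 c1 c2 M Bpos Mbar P1 e01 rho by unfold_locales auto
  have "Jfun n a abar c Mbar B P0 P1 e \<theta> x g
      = (\<Sum>i<n. (P0 ^\<^sub>m (\<theta> - 1) * P1) $$ (i,g) * Jstate \<theta> i (x^2))"
    by (rule Jfun_eq_sum_Jstate[OF P0 g])
  also have "\<dots> < 0"
    using Jstate_neg[OF _ \<theta>] Q g
    by (intro column_stochastic_weighted_sum_neg column_stochastic_mult column_stochastic_pow P0 P1) auto
  finally show "Jfun n a abar c Mbar B P0 P1 e \<theta> x g < 0" .
qed

end
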